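(* Let $M\in SL_2(\mathbb{Z})$ be hyperbolic and let $\epsilon>0$. Then there exists $c_M>0$ such that for every $\kappa$ with $0\le\kappa<c_M$ there exist constants $c_1>c_2>0$ such that for all $n_1,n_2\in\mathbb{Z}^2$ there exists $y_{n_1,n_2}\in\mathbb{R}^2$ with $\|y_{n_1,n_2}\|<\epsilon$ such that for every map $R:\mathbb{R}^2\to\mathbb{R}_{\ge0}$ satisfying $R(z)\le\kappa\|z\|$ for all $z$ with $\|z\|<\epsilon$, one has $$-c_1\big(|n_1|_M-|n_2|_M\big)-\big(n_2^TM-n_1^T\big)y_{n_1,n_2}+\|n_2\|\,R(y_{n_1,n_2})\le -c_2\big(\|n_1\|+\|n_2\|\big).$$
   Context: For $z=(z_1,z_2)\in\mathbb{R}^2$, $\|z\|=|z_1|+|z_2|$; $n^T$ denotes the transpose (row vector). A matrix $M\in SL_2(\mathbb{Z})$ is hyperbolic if none of its eigenvalues has modulus $1$; let $E^+,E^-$ be the eigenlines of the transpose $M^T$ for the eigenvalues of modulus $\lambda_M>1$ and $\lambda_M^{-1}$. Every $y\in\mathbb{R}^2$ decomposes uniquely as $y=y^+_M+y^-_M$ with $y^\pm_M\in E^\pm$, and $|y|_M:=\|y^+_M\|-\|y^-_M\|$. *)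

theory Defs
  imports "HOL-Analysis.Analysis"
begin

definition norm1 :: "real^2 \<Rightarrow> real" where
  "norm1 z = \<bar>z $ 1\<bar> + \<bar>z $ 2\<bar>"

definition int_vec :: "real^2 \<Rightarrow> bool" where
  "int_vec n \<longleftrightarrow> (\<forall>i. n $ i \<in> \<int>)"

definition SL2Z :: "real^2^2 \<Rightarrow> bool" where
  "SL2Z M \<longleftrightarrow> (\<forall>i j. M $ i $ j \<in> \<int>) \<and> det M = 1"

definition cmat :: "real^2^2 \<Rightarrow> complex^2^2" where
  "cmat M = (\<chi> i j. complex_of_real (M $ i $ j))"

definition hyperbolic :: "real^2^2 \<Rightarrow> bool" where
  "hyperbolic M \<longleftrightarrow>
     (\<forall>l::complex. (\<exists>v. v \<noteq> 0 \<and> cmat M *v v = l *s v) \<longrightarrow> cmod l \<noteq> 1)"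

definition Eplus :: "real^2^2 \<Rightarrow> (real^2) set" where
  "Eplus M = {v. \<exists>l. \<bar>l\<bar> > 1 \<and> transpose M *v v = l *s v}"

definition Eminus :: "real^2^2 \<Rightarrow> (real^2) set" where
  "Eminus M = {v. \<exists>l. \<bar>l\<bar> < 1 \<and> transpose M *v v = l *s v}"

definition ydecomp :: "real^2^2 \<Rightarrow> real^2 \<Rightarrow> (real^2) \<times> (real^2)" where
  "ydecomp M y = (THE p. fst p \<in> Eplus M \<and> snd p \<in> Eminus M \<and> y = fst p + snd p)"

definition Mnorm :: "real^2^2 \<Rightarrow> real^2 \<Rightarrow> real" where
  "Mnorm M y = norm1 (fst (ydecomp M y)) - norm1 (snd (ydecomp M y))"

end

theory Submission
  imports Defs
begin

text \<open>
  Hyperbolicity of \<open>M \<in> SL\<^sub>2(\<int>)\<close> forces \<open>(tr M)\<^sup>2 > 4\<close>, so \<open>M\<^sup>T\<close> has real eigenvectors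
  \<open>u, v\<close> with eigenvalues \<open>\<lambda>, \<lambda>\<^sup>-\<^sup>1\<close>, \<open>|\<lambda>| > 1\<close>. In the coordinates \<open>x = \<alpha>(x) u + \<beta>(x) v\<close> one has
  \<open>|x|\<^sub>M = |\<alpha>(x)| \<parallel>u\<parallel> - |\<beta>(x)| \<parallel>v\<parallel>\<close>, which is Lipschitz and grows under \<open>M\<^sup>T\<close> by at least
  \<open>g \<parallel>x\<parallel>\<close>. Take \<open>y = (\<epsilon>/4) sgn(M\<^sup>T n\<^sub>2 - n\<^sub>1)\<close> (componentwise): the linear term becomes
  \<open>-(\<epsilon>/4) \<parallel>M\<^sup>T n\<^sub>2 - n\<^sub>1\<parallel>\<close>, which absorbs the Lipschitz error in
  \<open>|n\<^sub>1|\<^sub>M - |M\<^sup>T n\<^sub>2|\<^sub>M\<close>, while the growth \<open>|M\<^sup>T n\<^sub>2|\<^sub>M - |n\<^sub>2|\<^sub>M \<ge> g \<parallel>n\<^sub>2\<parallel>\<close> absorbs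
  \<open>\<parallel>n\<^sub>2\<parallel> R(y) \<le> \<kappa> (\<epsilon>/2) \<parallel>n\<^sub>2\<parallel>\<close> once \<open>\<kappa>\<close> is small compared to \<open>g\<close>.
\<close>

lemma matrix_vector_mult_2_nth:
  "(A *v (x::'a::comm_semiring_1^2)) $ i = A$i$1 * x$1 + A$i$2 * x$2"
  by (simp add: matrix_vector_mult_def sum_2)

definition cross2 :: "real^2 \<Rightarrow> real^2 \<Rightarrow> real" where
  "cross2 x y = x$1 * y$2 - x$2 * y$1"

lemma cross2_add_scale_left:
  "cross2 (a *s x + b *s y) z = a * cross2 x z + b * cross2 y z"
  by (simp add: cross2_def algebra_simps)

lemma cross2_add_scale_right:
  "cross2 z (a *s x + b *s y) = a * cross2 z x + b * cross2 z y"
  by (simp add: cross2_def algebra_simps)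

lemma cross2_diff_left: "cross2 (x - y) z = cross2 x z - cross2 y z"
  and cross2_diff_right: "cross2 z (x - y) = cross2 z x - cross2 z y"
  by (simp_all add: cross2_def algebra_simps)

lemma cross2_self [simp]: "cross2 x x = 0"
  by (simp add: cross2_def)

lemma cramer_rule_2:
  assumes "cross2 u v \<noteq> 0"
  shows "x = (cross2 x v / cross2 u v) *s u + (cross2 u x / cross2 u v) *s v"
proof -
  have "cross2 u v *s x = cross2 x v *s u + cross2 u x *s v"
    by (simp add: vec_eq_iff forall_2 cross2_def algebra_simps)
  with assms show ?thesis
    by (simp add: vec_eq_iff field_simps)
qed

lemma cross2_eq_0_imp_parallel:
  assumes "cross2 u v = 0" "u \<noteq> 0"
  shows "\<exists>c. v = c *s u"
proof (cases "u$1 = 0")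
  case True
  with assms have "u$2 \<noteq> 0" by (auto simp: vec_eq_iff forall_2)
  with True assms(1) have "v = (v$2 / u$2) *s u" by (auto simp: vec_eq_iff forall_2 cross2_def)
  then show ?thesis ..
next
  case False
  with assms(1) have "v = (v$1 / u$1) *s u" by (auto simp: vec_eq_iff forall_2 cross2_def field_simps)
  then show ?thesis ..
qed

lemma norm1_nonneg: "norm1 x \<ge> 0"
  by (simp add: norm1_def)

lemma norm1_pos: "x \<noteq> 0 \<Longrightarrow> norm1 x > 0"
  by (auto simp: norm1_def vec_eq_iff forall_2 add_pos_nonneg add_nonneg_pos)

lemma norm1_add_le: "norm1 (x + y) \<le> norm1 x + norm1 y"
  by (simp add: norm1_def abs_triangle_ineq add_mono)

lemma norm1_diff_le: "norm1 (x - y) \<le> norm1 x + norm1 y"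
  by (simp add: norm1_def abs_triangle_ineq4 add_mono)

lemma norm1_scale: "norm1 (c *s x) = \<bar>c\<bar> * norm1 x"
  by (simp add: norm1_def abs_mult algebra_simps)

lemma abs_cross2_le: "\<bar>cross2 x y\<bar> \<le> norm1 x * norm1 y"
proof -
  have "\<bar>cross2 x y\<bar> \<le> \<bar>x$1\<bar> * \<bar>y$2\<bar> + \<bar>x$2\<bar> * \<bar>y$1\<bar>"
    unfolding cross2_def by (metis abs_mult abs_triangle_ineq4)
  also have "\<dots> \<le> norm1 x * norm1 y"
    by (simp add: norm1_def algebra_simps)
  finally show ?thesis .
qed

lemma norm1_matrix_vector_le:
  "norm1 (A *v x) \<le> (norm1 (column 1 A) + norm1 (column 2 A)) * norm1 x"
proof -
  have "A *v x = x$1 *s column 1 A + x$2 *s column 2 A"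
    by (simp add: vec_eq_iff matrix_vector_mult_2_nth column_def mult.commute)
  then have "norm1 (A *v x) \<le> \<bar>x$1\<bar> * norm1 (column 1 A) + \<bar>x$2\<bar> * norm1 (column 2 A)"
    by (metis norm1_add_le norm1_scale)
  also have "\<dots> \<le> (norm1 (column 1 A) + norm1 (column 2 A)) * norm1 x"
    using norm1_nonneg[of "column 1 A"] norm1_nonneg[of "column 2 A"]
    by (simp add: norm1_def algebra_simps)
  finally show ?thesis .
qed

text \<open>Keeps \<open>transpose M *v x\<close>, the form in which \<open>Eplus\<close> and \<open>Eminus\<close> are stated,
  from being rewritten to \<open>x v* M\<close>.\<close>
declare transpose_matrix_vector [simp del]

lemma char_poly_root_eigenvector_2:
  fixes A :: "'a::field^2^2"
  assumes "l^2 - (A$1$1 + A$2$2) * l + det A = 0"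
  shows "\<exists>v. v \<noteq> 0 \<and> A *v v = l *s v"
proof -
  consider "A$1$2 \<noteq> 0 \<or> l \<noteq> A$1$1" | "l \<noteq> A$2$2 \<or> A$2$1 \<noteq> 0"
    | "A$1$2 = 0" "l = A$1$1" "l = A$2$2" "A$2$1 = 0"
    by blast
  then show ?thesis
  proof cases
    case 1
    let ?v = "vector [A$1$2, l - A$1$1] :: 'a^2"
    have "?v \<noteq> 0" "A *v ?v = l *s ?v"
      using 1 assms by (auto simp: vec_eq_iff forall_2 matrix_vector_mult_2_nth det_2
          algebra_simps power2_eq_square)
    then show ?thesis by blast
  next
    case 2
    let ?v = "vector [l - A$2$2, A$2$1] :: 'a^2"
    have "?v \<noteq> 0" "A *v ?v = l *s ?v"
      using 2 assms by (auto simp: vec_eq_iff forall_2 matrix_vector_mult_2_nth det_2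
          algebra_simps power2_eq_square)
    then show ?thesis by blast
  next
    case 3
    let ?v = "vector [1, 0] :: 'a^2"
    have "?v \<noteq> 0" "A *v ?v = l *s ?v"
      using 3 by (auto simp: vec_eq_iff forall_2 matrix_vector_mult_2_nth)
    then show ?thesis by blast
  qed
qed

lemma SL2Z_hyperbolic_trace_sq_gt_4:
  assumes "SL2Z M" "hyperbolic M"
  shows "(M$1$1 + M$2$2)^2 > 4"
proof (rule ccontr)
  let ?t = "M$1$1 + M$2$2"
  assume "\<not> ?t^2 > 4"
  define s where "s = sqrt (4 - ?t^2)"
  have s2: "s^2 = 4 - ?t^2"
    using \<open>\<not> ?t^2 > 4\<close> by (simp add: s_def)
  define z where "z = Complex (?t/2) (s/2)"
  have "det (cmat M) = 1"
    using assms(1) by (simp add: SL2Z_def det_2 cmat_def flip: of_real_mult of_real_diff)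
  moreover have "z^2 - complex_of_real ?t * z + 1 = 0"
    using s2 by (simp add: z_def complex_eq_iff power2_eq_square field_simps)
  ultimately have "z^2 - (cmat M$1$1 + cmat M$2$2) * z + det (cmat M) = 0"
    by (simp add: cmat_def)
  then obtain v where "v \<noteq> 0" "cmat M *v v = z *s v"
    using char_poly_root_eigenvector_2 by blast
  with assms(2) have "cmod z \<noteq> 1"
    unfolding hyperbolic_def by blast
  moreover have "cmod z = 1"
    using s2 by (simp add: z_def cmod_def power_divide field_simps)
  ultimately show False by simp
qed

lemma reciprocal_quadratic_root_gt_1:
  fixes t :: real
  assumes "t^2 > 4"
  obtains l where "\<bar>l\<bar> > 1" "l^2 - t * l + 1 = 0"
proof -
  define s where "s = sqrt (t^2 - 4)"
  have s: "s^2 = t^2 - 4" "s \<ge> 0"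
    using assms by (auto simp: s_def)
  have "2^2 < \<bar>t\<bar>^2"
    using assms by simp
  then have "\<bar>t\<bar> > 2"
    using power_less_imp_less_base by fastforce
  then consider "t > 2" | "t < -2" by linarith
  then show ?thesis
  proof cases
    case 1
    with s show ?thesis
      by (intro that[of "(t + s) / 2"]) (auto simp: field_simps power2_eq_square)
  next
    case 2
    with s show ?thesis
      by (intro that[of "(t - s) / 2"]) (auto simp: field_simps power2_eq_square)
  qed
qed

lemma SL2Z_hyperbolic_transpose_eigenpairs:
  assumes "SL2Z M" "hyperbolic M"
  obtains l m u v where "\<bar>l\<bar> > 1" "\<bar>m\<bar> < 1" "u \<noteq> 0" "v \<noteq> 0"
    "transpose M *v u = l *s u" "transpose M *v v = m *s v"
proof -
  let ?t = "M$1$1 + M$2$2"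
  obtain l where l: "\<bar>l\<bar> > 1" "l^2 - ?t * l + 1 = 0"
    using reciprocal_quadratic_root_gt_1 SL2Z_hyperbolic_trace_sq_gt_4[OF assms] by blast
  define m where "m = 1 / l"
  have "\<bar>m\<bar> < 1"
    using l(1) by (simp add: m_def abs_divide)
  have "m^2 - ?t * m + 1 = (l^2 - ?t * l + 1) / l^2"
    using l(1) by (simp add: m_def field_simps power2_eq_square)
  with l(2) have m: "m^2 - ?t * m + 1 = 0" by simp
  have char_poly: "k^2 - (transpose M$1$1 + transpose M$2$2) * k + det (transpose M)
      = k^2 - ?t * k + 1" for k
    using assms(1) by (simp add: SL2Z_def det_transpose) (simp add: transpose_def)
  obtain u where "u \<noteq> 0" "transpose M *v u = l *s u"
    using char_poly_root_eigenvector_2[of l "transpose M", unfolded char_poly] l(2) by blast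
  moreover obtain v where "v \<noteq> 0" "transpose M *v v = m *s v"
    using char_poly_root_eigenvector_2[of m "transpose M", unfolded char_poly] m by blast
  ultimately show ?thesis
    using that l(1) \<open>\<bar>m\<bar> < 1\<close> by blast
qed

locale transpose_eigenpairs =
  fixes M :: "real^2^2" and l m :: real and u v :: "real^2"
  assumes expanding: "\<bar>l\<bar> > 1" and contracting: "\<bar>m\<bar> < 1"
    and u_nonzero: "u \<noteq> 0" and v_nonzero: "v \<noteq> 0"
    and eigen_u: "transpose M *v u = l *s u" and eigen_v: "transpose M *v v = m *s v"
begin

lemma cross2_eigenvectors_nonzero: "cross2 u v \<noteq> 0"
proof
  assume "cross2 u v = 0"
  then obtain c where c: "v = c *s u"
    using cross2_eq_0_imp_parallel u_nonzero by blast
  have "transpose M *v v = l *s v"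
    by (simp add: c eigen_u vector_scalar_commute mult.commute)
  with eigen_v have "m *s v = l *s v"
    by metis
  then show False
    using expanding contracting v_nonzero by auto
qed

definition coord_u :: "real^2 \<Rightarrow> real" where
  "coord_u x = cross2 x v / cross2 u v"

definition coord_v :: "real^2 \<Rightarrow> real" where
  "coord_v x = cross2 u x / cross2 u v"

lemma eigen_decomposition: "coord_u x *s u + coord_v x *s v = x"
  unfolding coord_u_def coord_v_def by (rule cramer_rule_2[OF cross2_eigenvectors_nonzero, symmetric])

lemma coord_lincomb [simp]:
  "coord_u (a *s u + b *s v) = a" "coord_v (a *s u + b *s v) = b"
  using cross2_eigenvectors_nonzero
  by (simp_all add: coord_u_def coord_v_def cross2_add_scale_left cross2_add_scale_right)

lemma coord_diff:
  "coord_u (x - y) = coord_u x - coord_u y" "coord_v (x - y) = coord_v x - coord_v y"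
  by (simp_all add: coord_u_def coord_v_def cross2_diff_left cross2_diff_right diff_divide_distrib)

lemma coord_transpose:
  "coord_u (transpose M *v x) = l * coord_u x" "coord_v (transpose M *v x) = m * coord_v x"
proof -
  have "transpose M *v x = (l * coord_u x) *s u + (m * coord_v x) *s v"
    by (subst eigen_decomposition[symmetric])
      (simp add: matrix_vector_right_distrib vector_scalar_commute eigen_u eigen_v mult.commute)
  then show "coord_u (transpose M *v x) = l * coord_u x" "coord_v (transpose M *v x) = m * coord_v x"
    by simp_all
qed

lemma coord_scale:
  "coord_u (k *s x) = k * coord_u x" "coord_v (k *s x) = k * coord_v x"
  by (simp_all add: coord_u_def coord_v_def cross2_def algebra_simps)

lemma eigenvector_coords:
  assumes "transpose M *v x = k *s x"
  shows "(k - l) * coord_u x = 0" "(k - m) * coord_v x = 0"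
  using coord_transpose[of x] coord_scale[of k x] by (simp_all add: assms algebra_simps)

lemma Eplus_eq: "Eplus M = range (\<lambda>c. c *s u)"
proof (intro subset_antisym subsetI)
  fix x assume "x \<in> Eplus M"
  then obtain k where "\<bar>k\<bar> > 1" "transpose M *v x = k *s x"
    unfolding Eplus_def by blast
  with contracting have "coord_v x = 0"
    using eigenvector_coords(2) by force
  then show "x \<in> range (\<lambda>c. c *s u)"
    using eigen_decomposition[of x] by (metis add.right_neutral rangeI vector_smult_lzero)
next
  fix x assume "x \<in> range (\<lambda>c. c *s u)"
  then obtain c where "x = c *s u" by blast
  then have "transpose M *v x = l *s x"
    by (simp add: eigen_u vector_scalar_commute mult.commute)
  then show "x \<in> Eplus M"
    unfolding Eplus_def using expanding by blast
qed

lemma Eminus_eq: "Eminus M = range (\<lambda>c. c *s v)"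
proof (intro subset_antisym subsetI)
  fix x assume "x \<in> Eminus M"
  then obtain k where "\<bar>k\<bar> < 1" "transpose M *v x = k *s x"
    unfolding Eminus_def by blast
  with expanding have "coord_u x = 0"
    using eigenvector_coords(1) by force
  then show "x \<in> range (\<lambda>c. c *s v)"
    using eigen_decomposition[of x] by (metis add_0 rangeI vector_smult_lzero)
next
  fix x assume "x \<in> range (\<lambda>c. c *s v)"
  then obtain c where "x = c *s v" by blast
  then have "transpose M *v x = m *s x"
    by (simp add: eigen_v vector_scalar_commute mult.commute)
  then show "x \<in> Eminus M"
    unfolding Eminus_def using contracting by blast
qed

lemma ydecomp_eq: "ydecomp M x = (coord_u x *s u, coord_v x *s v)"
  unfolding ydecomp_def
proof (rule the_equality)
  fix p assume p: "fst p \<in> Eplus M \<and> snd p \<in> Eminus M \<and> x = fst p + snd p"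
  then obtain a b where ab: "fst p = a *s u" "snd p = b *s v"
    unfolding Eplus_eq Eminus_eq by blast
  with p have "coord_u x = a" "coord_v x = b"
    by simp_all
  with ab show "p = (coord_u x *s u, coord_v x *s v)"
    by (simp add: prod_eq_iff)
qed (auto simp: Eplus_eq Eminus_eq eigen_decomposition)

lemma Mnorm_eq: "Mnorm M x = \<bar>coord_u x\<bar> * norm1 u - \<bar>coord_v x\<bar> * norm1 v"
  by (simp add: Mnorm_def ydecomp_eq norm1_scale)

lemma abs_coord_le:
  "\<bar>coord_u x\<bar> \<le> norm1 x * norm1 v / \<bar>cross2 u v\<bar>"
  "\<bar>coord_v x\<bar> \<le> norm1 u * norm1 x / \<bar>cross2 u v\<bar>"
  by (simp_all add: coord_u_def coord_v_def abs_divide divide_right_mono abs_cross2_le)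

lemma Mnorm_lipschitz: "\<exists>L>0. \<forall>x z. \<bar>Mnorm M x - Mnorm M z\<bar> \<le> L * norm1 (x - z)"
proof (intro exI conjI allI)
  define L where "L = 2 * norm1 u * norm1 v / \<bar>cross2 u v\<bar>"
  show "L > 0"
    using norm1_pos[OF u_nonzero] norm1_pos[OF v_nonzero] cross2_eigenvectors_nonzero
    by (simp add: L_def)
  fix x z :: "real^2"
  let ?d = "x - z"
  have "\<bar>Mnorm M x - Mnorm M z\<bar>
      = \<bar>(\<bar>coord_u x\<bar> - \<bar>coord_u z\<bar>) * norm1 u - (\<bar>coord_v x\<bar> - \<bar>coord_v z\<bar>) * norm1 v\<bar>"
    by (simp add: Mnorm_eq algebra_simps)
  also have "\<dots> \<le> \<bar>coord_u ?d\<bar> * norm1 u + \<bar>coord_v ?d\<bar> * norm1 v"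
    unfolding coord_diff
    by (rule order_trans[OF abs_triangle_ineq4], unfold abs_mult abs_of_nonneg[OF norm1_nonneg])
      (intro add_mono mult_right_mono abs_triangle_ineq3 norm1_nonneg)
  also have "\<dots> \<le> (norm1 ?d * norm1 v / \<bar>cross2 u v\<bar>) * norm1 u
      + (norm1 u * norm1 ?d / \<bar>cross2 u v\<bar>) * norm1 v"
    by (intro add_mono mult_right_mono abs_coord_le norm1_nonneg)
  also have "\<dots> = L * norm1 ?d"
    by (simp add: L_def field_simps)
  finally show "\<bar>Mnorm M x - Mnorm M z\<bar> \<le> L * norm1 ?d" .
qed

lemma Mnorm_expanding: "\<exists>g>0. \<forall>x. Mnorm M (transpose M *v x) - Mnorm M x \<ge> g * norm1 x"
proof (intro exI conjI allI)
  define g where "g = min (\<bar>l\<bar> - 1) (1 - \<bar>m\<bar>)"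
  show "g > 0"
    using expanding contracting by (simp add: g_def)
  fix x :: "real^2"
  let ?a = "\<bar>coord_u x\<bar> * norm1 u" and ?b = "\<bar>coord_v x\<bar> * norm1 v"
  have "norm1 x \<le> ?a + ?b"
    using norm1_add_le[of "coord_u x *s u" "coord_v x *s v"] by (simp add: eigen_decomposition norm1_scale)
  then have "g * norm1 x \<le> g * ?a + g * ?b"
    using \<open>g > 0\<close> by (metis distrib_left mult_left_mono less_eq_real_def)
  also have "\<dots> \<le> (\<bar>l\<bar> - 1) * ?a + (1 - \<bar>m\<bar>) * ?b"
    using norm1_nonneg[of u] norm1_nonneg[of v] by (intro add_mono mult_right_mono) (auto simp: g_def)
  also have "\<dots> = Mnorm M (transpose M *v x) - Mnorm M x"
    by (simp add: Mnorm_eq coord_transpose abs_mult algebra_simps)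
  finally show "Mnorm M (transpose M *v x) - Mnorm M x \<ge> g * norm1 x" .
qed

end

lemma SL2Z_hyperbolic_Mnorm_estimates:
  assumes "SL2Z M" "hyperbolic M"
  obtains L g where "L > 0" "g > 0"
    "\<And>x z. \<bar>Mnorm M x - Mnorm M z\<bar> \<le> L * norm1 (x - z)"
    "\<And>x. Mnorm M (transpose M *v x) - Mnorm M x \<ge> g * norm1 x"
proof -
  obtain l m u v where "transpose_eigenpairs M l m u v"
    using SL2Z_hyperbolic_transpose_eigenpairs[OF assms] transpose_eigenpairs.intro by metis
  then interpret transpose_eigenpairs M l m u v .
  show ?thesis
    using that Mnorm_lipschitz Mnorm_expanding by blast
qed

lemma exists_sign_test_vector:
  "\<exists>y. norm1 y \<le> 2 * \<bar>c\<bar> \<and> n2 \<bullet> (A *v y) - n1 \<bullet> y = c * norm1 (transpose A *v n2 - n1)"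
proof (intro exI conjI)
  let ?w = "transpose A *v n2 - n1"
  let ?y = "(\<chi> i. c * sgn (?w$i)) :: real^2"
  show "norm1 ?y \<le> 2 * \<bar>c\<bar>"
    by (simp add: norm1_def abs_mult abs_sgn_eq mult_le_cancel_left1 split: if_splits)
  have "n2 \<bullet> (A *v ?y) - n1 \<bullet> ?y = ?w \<bullet> ?y"
    by (simp add: transpose_matrix_vector dot_lmul_matrix inner_diff_left)
  also have "\<dots> = c * norm1 ?w"
    by (simp add: inner_vec_def sum_2 norm1_def algebra_simps abs_sgn mult.left_commute[of _ c])
  finally show "n2 \<bullet> (A *v ?y) - n1 \<bullet> ?y = c * norm1 ?w" .
qed

lemma lyapunov_drift_bound:
  fixes F :: "real^2 \<Rightarrow> real" and B :: "real^2^2"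
  assumes lipschitz: "\<And>x z. \<bar>F x - F z\<bar> \<le> L * norm1 (x - z)"
    and expanding: "\<And>x. F (B *v x) - F x \<ge> g * norm1 x"
    and bounded: "\<And>x. norm1 (B *v x) \<le> K * norm1 x"
    and c: "0 \<le> c1" "0 \<le> c2" "c1 * L + c2 \<le> a" "r + c2 * (K + 1) \<le> c1 * g"
  shows "- c1 * (F n1 - F n2) - a * norm1 (B *v n2 - n1) + norm1 n2 * r
    \<le> - c2 * (norm1 n1 + norm1 n2)"
proof -
  let ?w = "norm1 (B *v n2 - n1)" and ?n2 = "norm1 n2"
  have "F n1 - F n2 \<ge> g * ?n2 - L * ?w"
    using abs_le_D1[OF lipschitz[of "B *v n2" n1]] expanding[of n2] by linarith
  then have "- c1 * (F n1 - F n2) \<le> c1 * L * ?w - c1 * g * ?n2"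
    using c(1) by (metis mult_left_mono minus_diff_eq mult_minus_left right_diff_distrib
        mult.assoc neg_le_iff_le)
  moreover have "c2 * norm1 n1 \<le> c2 * (K * ?n2 + ?w)"
    using norm1_diff_le[of "B *v n2" "B *v n2 - n1"] bounded[of n2] c(2)
    by (intro mult_left_mono) auto
  moreover have "(c1 * L - a) * ?w \<le> - c2 * ?w"
    using c(3) norm1_nonneg by (intro mult_right_mono) auto
  moreover have "(r - c1 * g) * ?n2 \<le> - c2 * (K + 1) * ?n2"
    using c(4) norm1_nonneg by (intro mult_right_mono) auto
  ultimately show ?thesis
    by (simp add: algebra_simps)
qed

lemma lyapunov_drift_constants:
  fixes L g K \<delta> :: real
  assumes "L > 0" "g > 0" "K \<ge> 0" "\<delta> > 0"
  shows "\<exists>cM>0. \<forall>\<kappa>. 0 \<le> \<kappa> \<and> \<kappa> < cM \<longrightarrow>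
    (\<exists>c1 c2. c1 > c2 \<and> c2 > 0 \<and> c1 * L + c2 \<le> \<delta> / 2 \<and> \<kappa> * \<delta> + c2 * (K + 1) \<le> c1 * g)"
proof (intro exI conjI allI impI)
  define c1 where "c1 = \<delta> / (4 * L)"
  show "g / (4 * L) > 0"
    using assms by simp
  fix \<kappa> assume \<kappa>: "0 \<le> \<kappa> \<and> \<kappa> < g / (4 * L)"
  have "\<kappa> * \<delta> < c1 * g"
    using \<kappa> assms by (simp add: c1_def field_simps)
  define c2 where "c2 = min (min (c1 / 2) (\<delta> / 4)) ((c1 * g - \<kappa> * \<delta>) / (K + 1))"
  have "c1 > 0"
    using assms by (simp add: c1_def)
  show "c1 > c2" "c2 > 0"
    using \<open>c1 > 0\<close> \<open>\<kappa> * \<delta> < c1 * g\<close> assms by (auto simp: c2_def)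
  show "c1 * L + c2 \<le> \<delta> / 2"
    using assms by (simp add: c1_def c2_def)
  have "c2 \<le> (c1 * g - \<kappa> * \<delta>) / (K + 1)"
    by (simp add: c2_def)
  then show "\<kappa> * \<delta> + c2 * (K + 1) \<le> c1 * g"
    using assms by (simp add: field_simps)
qed

lemma lyapunov_drift_witness:
  fixes F :: "real^2 \<Rightarrow> real" and A :: "real^2^2"
  assumes lipschitz: "\<And>x z. \<bar>F x - F z\<bar> \<le> L * norm1 (x - z)"
    and expanding: "\<And>x. F (transpose A *v x) - F x \<ge> g * norm1 x"
    and bounded: "\<And>x. norm1 (transpose A *v x) \<le> K * norm1 x"
    and \<delta>: "0 < \<delta>" "\<delta> < \<epsilon>" and "0 \<le> \<kappa>"
    and c: "c1 > c2" "c2 > 0" "c1 * L + c2 \<le> \<delta> / 2" "\<kappa> * \<delta> + c2 * (K + 1) \<le> c1 * g"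
  shows "\<exists>y. norm1 y < \<epsilon> \<and>
    (\<forall>R :: real^2 \<Rightarrow> real. (\<forall>z. R z \<ge> 0) \<and> (\<forall>z. norm1 z < \<epsilon> \<longrightarrow> R z \<le> \<kappa> * norm1 z) \<longrightarrow>
      - c1 * (F n1 - F n2) - (n2 \<bullet> (A *v y) - n1 \<bullet> y) + norm1 n2 * R y
      \<le> - c2 * (norm1 n1 + norm1 n2))"
proof -
  obtain y where "norm1 y \<le> 2 * \<bar>\<delta> / 2\<bar>"
    and y_inner: "n2 \<bullet> (A *v y) - n1 \<bullet> y = \<delta> / 2 * norm1 (transpose A *v n2 - n1)"
    using exists_sign_test_vector by blast
  then have y: "norm1 y \<le> \<delta>"
    using \<delta>(1) by simp
  have "R y + c2 * (K + 1) \<le> c1 * g" if "\<forall>z. norm1 z < \<epsilon> \<longrightarrow> R z \<le> \<kappa> * norm1 z" for R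
  proof -
    have "R y \<le> \<kappa> * \<delta>"
      using that y \<delta>(2) \<open>0 \<le> \<kappa>\<close> by (meson le_less_trans mult_left_mono order_trans)
    then show ?thesis
      using c(4) by linarith
  qed
  with c y \<delta>(2) show ?thesis
    by (intro exI[of _ y] conjI allI impI, linarith, unfold y_inner)
      (intro lyapunov_drift_bound[OF lipschitz expanding bounded]; auto)
qed

theorem lemma3p3:
  fixes M :: "real^2^2" and \<epsilon> :: real
  assumes "SL2Z M" and "hyperbolic M" and "\<epsilon> > 0"
  shows "\<exists>cM > 0. \<forall>\<kappa>. 0 \<le> \<kappa> \<and> \<kappa> < cM \<longrightarrow>
    (\<exists>c1 c2. c1 > c2 \<and> c2 > 0 \<and>
      (\<forall>n1 n2. int_vec n1 \<and> int_vec n2 \<longrightarrow>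
        (\<exists>y. norm1 y < \<epsilon> \<and>
          (\<forall>R :: real^2 \<Rightarrow> real. (\<forall>z. R z \<ge> 0) \<and>
              (\<forall>z. norm1 z < \<epsilon> \<longrightarrow> R z \<le> \<kappa> * norm1 z) \<longrightarrow>
            - c1 * (Mnorm M n1 - Mnorm M n2) - (n2 \<bullet> (M *v y) - n1 \<bullet> y)
              + norm1 n2 * R y
            \<le> - c2 * (norm1 n1 + norm1 n2)))))"
proof -
  obtain L g where L: "L > 0" and g: "g > 0"
    and lipschitz: "\<And>x z. \<bar>Mnorm M x - Mnorm M z\<bar> \<le> L * norm1 (x - z)"
    and expanding: "\<And>x. Mnorm M (transpose M *v x) - Mnorm M x \<ge> g * norm1 x"
    using SL2Z_hyperbolic_Mnorm_estimates[OF assms(1,2)] by blast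
  define K where "K = norm1 (column 1 (transpose M)) + norm1 (column 2 (transpose M))"
  have bounded: "norm1 (transpose M *v x) \<le> K * norm1 x" for x
    unfolding K_def by (rule norm1_matrix_vector_le)
  have K: "K \<ge> 0"
    by (simp add: K_def norm1_nonneg)
  define \<delta> where "\<delta> = \<epsilon> / 2"
  have \<delta>: "\<delta> > 0" "\<delta> < \<epsilon>"
    using assms(3) by (simp_all add: \<delta>_def)
  obtain cM where "cM > 0" and constants: "\<And>\<kappa>. 0 \<le> \<kappa> \<and> \<kappa> < cM \<Longrightarrow> \<exists>c1 c2. c1 > c2 \<and> c2 > 0 \<and>
      c1 * L + c2 \<le> \<delta> / 2 \<and> \<kappa> * \<delta> + c2 * (K + 1) \<le> c1 * g"
    using lyapunov_drift_constants[OF L g K \<delta>(1)] by blast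
  show ?thesis
  proof (rule exI[of _ cM], intro conjI allI impI \<open>cM > 0\<close>, goal_cases)
    case (1 \<kappa>)
    then obtain c1 c2 where c: "c1 > c2" "c2 > 0" "c1 * L + c2 \<le> \<delta> / 2"
      "\<kappa> * \<delta> + c2 * (K + 1) \<le> c1 * g"
      using constants by blast
    show ?case
      using 1 by (intro exI[of _ c1] exI[of _ c2] conjI allI impI c(1,2)
          lyapunov_drift_witness[OF lipschitz expanding bounded \<delta> _ c]) simp
  qed
qed

end
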